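(* Let $G$ be a finite group and $G_-$ a subgroup of $G$. (I) Let $G_+$ be a subgroup such that $G=G_+G_-$ is a unique factorization, and let $\xi,\eta:G_+\to G_-$ be group homomorphisms such that $G_+'=\{u\xi(u^{-1}):u\in G_+\}$ and $G_+''=\{\eta(u^{-1})u:u\in G_+\}$ are normal subgroups of $G$ and $G_+'\to G_+''$, $u\xi(u^{-1})\mapsto \eta(u)u^{-1}$, is a well-defined group isomorphism. Put $A=G_+'$. Then $G$ is the internal semidirect product $A\rtimes G_-$ (with $G_-$ acting on $A$ by conjugation), the map $\zeta:A\to G_-$, $\zeta(u\xi(u^{-1}))=\xi(u)$, is a well-defined 1-cycle, and $F:G\to G$, $F(u\xi(u^{-1})x)=\eta(u)u^{-1}x$ ($u\in G_+$, $x\in G_-$), is a well-defined automorphism of $G$ satisfying (a) $F(x)=x$ for all $x\in G_-$ and (b) $F(a)a\in G_-$ for all $a\in A$. (II) Conversely, let $G_-$ act on a group $A$ by automorphisms, with $A\rtimes G_-$ finite, let $\zeta:A\to G_-$ be a 1-cycle and let $F$ be an automorphism of $A\rtimes G_-$ satisfying (a) and (b) above. Let $P:A\rtimes G_-\to G_-$, $ax\mapsto x$. Then $G_+=\{a\zeta(a):a\in A\}$ is a subgroup with $A\rtimes G_-=G_+G_-$ a unique factorization, and $\xi=P|_{G_+}$, $\eta=(P\circ F^{-1})|_{G_+}$ are group homomorphisms $G_+\to G_-$ satisfying the hypotheses of (I). (III) The constructions (I) and (II) are inverse to each other, giving a one-to-one correspondence between triples $(G=G_+G_-,\xi,\eta)$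 as in (I) and triples $(A\rtimes G_-,\zeta,F)$ as in (II).
   Context: A unique factorization $G=G_+G_-$ consists of subgroups $G_+,G_-$ such that every $g\in G$ is uniquely $g=g_+g_-$ with $g_+\in G_+$, $g_-\in G_-$. If a group $G_-$ acts on a group $A$ by automorphisms, $(x,a)\mapsto x\cdot a$, the semidirect product $A\rtimes G_-$ has elements $ax$ ($a\in A$, $x\in G_-$) with product $(ax)(by)=a(x\cdot b)xy$. A map $\zeta:A\to G_-$ is a 1-cycle if $\zeta(a)\zeta(b)=\zeta\big(a\,(\zeta(a)\cdot b)\big)$ for all $a,b\in A$. *)

theory Defs
  imports "HOL-Algebra.Algebra"
begin

definition unique_factorization ::
  "('g, 'm) monoid_scheme \<Rightarrow> 'g set \<Rightarrow> 'g set \<Rightarrow> bool" where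
  "unique_factorization G Gp Gm \<longleftrightarrow>
     subgroup Gp G \<and> subgroup Gm G \<and>
     (\<forall>g\<in>carrier G. \<exists>!p. p \<in> Gp \<times> Gm \<and> g = fst p \<otimes>\<^bsub>G\<^esub> snd p)"

definition plus1 :: "('g, 'm) monoid_scheme \<Rightarrow> 'g set \<Rightarrow> ('g \<Rightarrow> 'g) \<Rightarrow> 'g set" where
  "plus1 G Gp \<xi> = {u \<otimes>\<^bsub>G\<^esub> \<xi> (inv\<^bsub>G\<^esub> u) | u. u \<in> Gp}"

definition plus2 :: "('g, 'm) monoid_scheme \<Rightarrow> 'g set \<Rightarrow> ('g \<Rightarrow> 'g) \<Rightarrow> 'g set" where
  "plus2 G Gp \<eta> = {\<eta> (inv\<^bsub>G\<^esub> u) \<otimes>\<^bsub>G\<^esub> u | u. u \<in> Gp}"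

definition factorization_triple ::
  "('g, 'm) monoid_scheme \<Rightarrow> 'g set \<Rightarrow> 'g set \<Rightarrow> ('g \<Rightarrow> 'g) \<Rightarrow> ('g \<Rightarrow> 'g) \<Rightarrow> bool" where
  "factorization_triple G Gp Gm \<xi> \<eta> \<longleftrightarrow>
     group G \<and> finite (carrier G) \<and> subgroup Gm G \<and>
     unique_factorization G Gp Gm \<and>
     \<xi> \<in> hom (G\<lparr>carrier := Gp\<rparr>) (G\<lparr>carrier := Gm\<rparr>) \<and>
     \<eta> \<in> hom (G\<lparr>carrier := Gp\<rparr>) (G\<lparr>carrier := Gm\<rparr>) \<and>
     plus1 G Gp \<xi> \<lhd> G \<and> plus2 G Gp \<eta> \<lhd> G \<and>
     (\<exists>f. f \<in> iso (G\<lparr>carrier := plus1 G Gp \<xi>\<rparr>) (G\<lparr>carrier := plus2 G Gp \<eta>\<rparr>) \<and>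
          (\<forall>u\<in>Gp. f (u \<otimes>\<^bsub>G\<^esub> \<xi> (inv\<^bsub>G\<^esub> u)) = \<eta> u \<otimes>\<^bsub>G\<^esub> inv\<^bsub>G\<^esub> u))"

definition zeta_eq :: "('g, 'm) monoid_scheme \<Rightarrow> 'g set \<Rightarrow> ('g \<Rightarrow> 'g) \<Rightarrow> ('g \<Rightarrow> 'g) \<Rightarrow> bool" where
  "zeta_eq G Gp \<xi> \<zeta> \<longleftrightarrow> (\<forall>u\<in>Gp. \<zeta> (u \<otimes>\<^bsub>G\<^esub> \<xi> (inv\<^bsub>G\<^esub> u)) = \<xi> u)"

definition F_eq :: "('g, 'm) monoid_scheme \<Rightarrow> 'g set \<Rightarrow> 'g set \<Rightarrow> ('g \<Rightarrow> 'g) \<Rightarrow> ('g \<Rightarrow> 'g)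
    \<Rightarrow> ('g \<Rightarrow> 'g) \<Rightarrow> bool" where
  "F_eq G Gp Gm \<xi> \<eta> F \<longleftrightarrow>
     (\<forall>u\<in>Gp. \<forall>x\<in>Gm. F (u \<otimes>\<^bsub>G\<^esub> \<xi> (inv\<^bsub>G\<^esub> u) \<otimes>\<^bsub>G\<^esub> x) = \<eta> u \<otimes>\<^bsub>G\<^esub> inv\<^bsub>G\<^esub> u \<otimes>\<^bsub>G\<^esub> x)"

definition conjg :: "('g, 'm) monoid_scheme \<Rightarrow> 'g \<Rightarrow> 'g \<Rightarrow> 'g" where
  "conjg G x a = x \<otimes>\<^bsub>G\<^esub> a \<otimes>\<^bsub>G\<^esub> inv\<^bsub>G\<^esub> x"

definition action_by_aut ::
  "('h, 'n) monoid_scheme \<Rightarrow> ('a, 'm) monoid_scheme \<Rightarrow> ('h \<Rightarrow> 'a \<Rightarrow> 'a) \<Rightarrow> bool" where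
  "action_by_aut H A \<phi> \<longleftrightarrow>
     group H \<and> group A \<and>
     (\<forall>x\<in>carrier H. \<phi> x \<in> iso A A) \<and>
     (\<forall>a\<in>carrier A. \<phi> \<one>\<^bsub>H\<^esub> a = a) \<and>
     (\<forall>x\<in>carrier H. \<forall>y\<in>carrier H. \<forall>a\<in>carrier A. \<phi> (x \<otimes>\<^bsub>H\<^esub> y) a = \<phi> x (\<phi> y a))"

text \<open>External semidirect product A \<rtimes> H; the element (a,x) stands for ax,
  and (a x)(b y) = a (x.b) x y.\<close>
definition semidirect ::
  "('a, 'm) monoid_scheme \<Rightarrow> ('h, 'n) monoid_scheme \<Rightarrow> ('h \<Rightarrow> 'a \<Rightarrow> 'a) \<Rightarrow> ('a \<times> 'h) monoid" where
  "semidirect A H \<phi> =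
    \<lparr>carrier = carrier A \<times> carrier H,
     monoid.mult = (\<lambda>(a, x) (b, y). (a \<otimes>\<^bsub>A\<^esub> \<phi> x b, x \<otimes>\<^bsub>H\<^esub> y)),
     one = (\<one>\<^bsub>A\<^esub>, \<one>\<^bsub>H\<^esub>)\<rparr>"

definition inA :: "('a, 'm) monoid_scheme \<Rightarrow> ('h, 'n) monoid_scheme \<Rightarrow> 'a \<Rightarrow> 'a \<times> 'h" where
  "inA A H a = (a, \<one>\<^bsub>H\<^esub>)"

definition inH :: "('a, 'm) monoid_scheme \<Rightarrow> ('h, 'n) monoid_scheme \<Rightarrow> 'h \<Rightarrow> 'a \<times> 'h" where
  "inH A H x = (\<one>\<^bsub>A\<^esub>, x)"

definition one_cycle ::
  "('a, 'm) monoid_scheme \<Rightarrow> ('h, 'n) monoid_scheme \<Rightarrow> ('h \<Rightarrow> 'a \<Rightarrow> 'a) \<Rightarrow> ('a \<Rightarrow> 'h) \<Rightarrow> bool" where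
  "one_cycle A H \<phi> \<zeta> \<longleftrightarrow>
     \<zeta> \<in> carrier A \<rightarrow> carrier H \<and>
     (\<forall>a\<in>carrier A. \<forall>b\<in>carrier A. \<zeta> a \<otimes>\<^bsub>H\<^esub> \<zeta> b = \<zeta> (a \<otimes>\<^bsub>A\<^esub> \<phi> (\<zeta> a) b))"

text \<open>The hypotheses of part (II).  Inside A \<rtimes> H, the subgroup G_- is
  inH ` carrier H and A is inA ` carrier A.\<close>
definition cycle_triple ::
  "('a, 'm) monoid_scheme \<Rightarrow> ('h, 'n) monoid_scheme \<Rightarrow> ('h \<Rightarrow> 'a \<Rightarrow> 'a) \<Rightarrow> ('a \<Rightarrow> 'h)
    \<Rightarrow> ('a \<times> 'h \<Rightarrow> 'a \<times> 'h) \<Rightarrow> bool" where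
  "cycle_triple A H \<phi> \<zeta> F \<longleftrightarrow>
     action_by_aut H A \<phi> \<and> finite (carrier (semidirect A H \<phi>)) \<and>
     one_cycle A H \<phi> \<zeta> \<and>
     F \<in> iso (semidirect A H \<phi>) (semidirect A H \<phi>) \<and>
     (\<forall>x\<in>carrier H. F (inH A H x) = inH A H x) \<and>
     (\<forall>a\<in>carrier A. F (inA A H a) \<otimes>\<^bsub>semidirect A H \<phi>\<^esub> inA A H a \<in> inH A H ` carrier H)"

definition Gminus_of :: "('a, 'm) monoid_scheme \<Rightarrow> ('h, 'n) monoid_scheme \<Rightarrow> ('a \<times> 'h) set" where
  "Gminus_of A H = inH A H ` carrier H"

definition Gplus_of ::
  "('a, 'm) monoid_scheme \<Rightarrow> ('h, 'n) monoid_scheme \<Rightarrow> ('h \<Rightarrow> 'a \<Rightarrow> 'a) \<Rightarrow> ('a \<Rightarrow> 'h) \<Rightarrow> ('a \<times> 'h) set" where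
  "Gplus_of A H \<phi> \<zeta> = {inA A H a \<otimes>\<^bsub>semidirect A H \<phi>\<^esub> inH A H (\<zeta> a) | a. a \<in> carrier A}"

text \<open>P : ax \<mapsto> x, viewed as a map into the subgroup G_- of A \<rtimes> H.\<close>
definition P_of :: "('a, 'm) monoid_scheme \<Rightarrow> ('h, 'n) monoid_scheme \<Rightarrow> 'a \<times> 'h \<Rightarrow> 'a \<times> 'h" where
  "P_of A H s = inH A H (snd s)"

definition xi_of :: "('a, 'm) monoid_scheme \<Rightarrow> ('h, 'n) monoid_scheme \<Rightarrow> 'a \<times> 'h \<Rightarrow> 'a \<times> 'h" where
  "xi_of A H = P_of A H"

definition eta_of ::
  "('a, 'm) monoid_scheme \<Rightarrow> ('h, 'n) monoid_scheme \<Rightarrow> ('h \<Rightarrow> 'a \<Rightarrow> 'a)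
    \<Rightarrow> ('a \<times> 'h \<Rightarrow> 'a \<times> 'h) \<Rightarrow> 'a \<times> 'h \<Rightarrow> 'a \<times> 'h" where
  "eta_of A H \<phi> F = P_of A H \<circ> inv_into (carrier (semidirect A H \<phi>)) F"

end

theory Submission
  imports Defs
begin

text \<open>
  (I) Everything comes from the uniqueness of the factorization \<open>G = G_+ G_-\<close>. An element
  \<open>u \<xi>(u)\<inverse>\<close> of \<open>A = G_+'\<close> that lies in \<open>G_-\<close> is trivial, because its \<open>G_+\<close>-component \<open>u\<close>
  must be \<open>1\<close>; hence \<open>G\<close> is the internal semidirect product of \<open>A\<close> and \<open>G_-\<close>. The
  \<open>G_+\<close>-component of \<open>u \<xi>(u\<inverse>) x\<close> is \<open>u\<close>, which makes \<open>\<zeta>\<close> and \<open>F\<close> well defined. \<open>F\<close> is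
  multiplicative on \<open>A\<close> since it agrees there with the given isomorphism \<open>G_+' \<rightarrow> G_+''\<close>, and
  it commutes with conjugation by \<open>G_-\<close>, as one sees by comparing \<open>G_+\<close>-components in
  \<open>G = G_+ G_-\<close> and in \<open>G = G_- G_+\<close>. Conditions (a) and (b) alone force an endomorphism
  of the semidirect product \<open>A G_-\<close> to be an involution, so \<open>F\<close> is an automorphism and \<open>F(A)\<close> is normal.

  (II) The cocycle identity says exactly that the graph \<open>{(a, \<zeta> a)}\<close> of \<open>\<zeta>\<close> is a subgroup,
  and it is a complement of \<open>G_-\<close>. Condition (b) forces \<open>F(a, 1) = (\<theta>.a\<inverse>, \<theta>)\<close>, and from this
  \<open>\<eta>(g) g\<inverse> = F(a)\<close> for \<open>g = (a, \<zeta> a)\<close>, so that \<open>G_+'' = F(A)\<close>.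

  (III) follows by transport along the isomorphism from the external semidirect product of
  \<open>A\<close> and \<open>G_-\<close> onto \<open>G\<close>, \<open>(a, x) \<mapsto> a x\<close>.
\<close>

lemma (in group) inv_mult_cancel_left [simp]:
  "x \<in> carrier G \<Longrightarrow> y \<in> carrier G \<Longrightarrow> inv x \<otimes> (x \<otimes> y) = y"
  by (simp flip: m_assoc)

lemma (in group) mult_inv_cancel_left [simp]:
  "x \<in> carrier G \<Longrightarrow> y \<in> carrier G \<Longrightarrow> x \<otimes> (inv x \<otimes> y) = y"
  by (simp flip: m_assoc)

lemma hom_restrict_carrier:
  assumes "f \<in> hom G H" and "J \<subseteq> carrier G"
  shows "f \<in> hom (G\<lparr>carrier := J\<rparr>) H"
  using assms unfolding hom_def by (auto simp: Pi_iff)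

lemma (in group) subgroup_homD:
  assumes J: "subgroup J G" and L: "subgroup L G"
    and f: "f \<in> hom (G\<lparr>carrier := J\<rparr>) (G\<lparr>carrier := L\<rparr>)"
  shows "u \<in> J \<Longrightarrow> f u \<in> L"
    and "u \<in> J \<Longrightarrow> v \<in> J \<Longrightarrow> f (u \<otimes> v) = f u \<otimes> f v"
    and "u \<in> J \<Longrightarrow> f (inv u) = inv (f u)"
    and "f \<one> = \<one>"
proof -
  interpret group_hom "G\<lparr>carrier := J\<rparr>" "G\<lparr>carrier := L\<rparr>" f
    using J L f by (simp add: group_hom_def group_hom_axioms_def subgroup.subgroup_is_group)
  show "u \<in> J \<Longrightarrow> f u \<in> L" using hom_closed by simp
  show "u \<in> J \<Longrightarrow> v \<in> J \<Longrightarrow> f (u \<otimes> v) = f u \<otimes> f v" using hom_mult by simp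
  show "u \<in> J \<Longrightarrow> f (inv u) = inv (f u)"
    using hom_inv[of u] hom_closed[of u] J L by simp
  show "f \<one> = \<one>" using hom_one by simp
qed

lemma (in group) action_by_aut_conjg:
  assumes "N \<lhd> G" and "subgroup K G"
  shows "action_by_aut (G\<lparr>carrier := K\<rparr>) (G\<lparr>carrier := N\<rparr>) (conjg G)"
proof -
  interpret N: normal N G by fact
  interpret K: subgroup K G by fact
  have closed: "conjg G x a \<in> N" if "x \<in> carrier G" "a \<in> N" for x a
    using that by (simp add: conjg_def N.inv_op_closed2)
  have cancel: "conjg G (inv x) (conjg G x a) = a" if "x \<in> carrier G" "a \<in> carrier G" for x a
    using that by (simp add: conjg_def m_assoc)
  have "conjg G x \<in> iso (G\<lparr>carrier := N\<rparr>) (G\<lparr>carrier := N\<rparr>)" if x: "x \<in> K" for x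
  proof (rule isoI)
    show "conjg G x \<in> hom (G\<lparr>carrier := N\<rparr>) (G\<lparr>carrier := N\<rparr>)"
    proof (rule homI)
      fix a b assume "a \<in> carrier (G\<lparr>carrier := N\<rparr>)" "b \<in> carrier (G\<lparr>carrier := N\<rparr>)"
      then have "a \<in> carrier G" "b \<in> carrier G" by auto
      then show "conjg G x (a \<otimes>\<^bsub>G\<lparr>carrier := N\<rparr>\<^esub> b) =
          conjg G x a \<otimes>\<^bsub>G\<lparr>carrier := N\<rparr>\<^esub> conjg G x b"
        using x by (simp add: conjg_def m_assoc)
    qed (use x closed in simp)
    show "bij_betw (conjg G x) (carrier (G\<lparr>carrier := N\<rparr>)) (carrier (G\<lparr>carrier := N\<rparr>))"
      by (rule bij_betwI[where g = "conjg G (inv x)"])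
        (use x closed cancel cancel[of "inv x"] in simp_all)
  qed
  moreover have "conjg G (x \<otimes> y) a = conjg G x (conjg G y a)"
    if "x \<in> K" "y \<in> K" "a \<in> N" for x y a
    using that by (simp add: conjg_def m_assoc inv_mult_group)
  moreover have "conjg G \<one> a = a" if "a \<in> N" for a
    using that by (simp add: conjg_def)
  ultimately show ?thesis
    using N.subgroup_is_group[OF is_group] K.subgroup_is_group[OF is_group]
    by (simp add: action_by_aut_def)
qed

section \<open>Internal semidirect products and their involutions\<close>

locale internal_semidirect = group G for G (structure) +
  fixes N K
  assumes normal_N: "N \<lhd> G"
    and subgroup_K: "subgroup K G"
    and N_inter_K: "N \<inter> K \<subseteq> {\<one>}"
    and N_mult_K: "carrier G \<subseteq> N <#> K"
begin

sublocale N: normal N G by (rule normal_N)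
sublocale K: subgroup K G by (rule subgroup_K)

lemma decompositionE:
  assumes "g \<in> carrier G"
  obtains a k where "a \<in> N" "k \<in> K" "g = a \<otimes> k"
  using N_mult_K assms unfolding set_mult_def by blast

lemma decomposition_unique:
  assumes mem: "a \<in> N" "b \<in> N" "k \<in> K" "l \<in> K" and eq: "a \<otimes> k = b \<otimes> l"
  shows "a = b" and "k = l"
proof -
  have "inv b \<otimes> a = inv b \<otimes> (a \<otimes> k) \<otimes> inv k" using mem by (simp add: m_assoc)
  also have "\<dots> = l \<otimes> inv k" using mem by (simp add: eq)
  finally have "inv b \<otimes> a \<in> K" using mem by simp
  moreover have "inv b \<otimes> a \<in> N" using mem by simp
  ultimately have "inv b \<otimes> a = \<one>" using N_inter_K by blast
  then show "a = b" using mem by (metis N.mem_carrier inv_closed inv_inv inv_equality)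
  then show "k = l" using mem eq by simp
qed

abbreviation (input) mult_pair :: "'a \<times> 'a \<Rightarrow> 'a" where
  "mult_pair s \<equiv> fst s \<otimes> snd s"

lemma mult_pair_iso:
  "mult_pair \<in> iso (semidirect (G\<lparr>carrier := N\<rparr>) (G\<lparr>carrier := K\<rparr>) (conjg G)) G"
proof (rule isoI)
  let ?S = "semidirect (G\<lparr>carrier := N\<rparr>) (G\<lparr>carrier := K\<rparr>) (conjg G)"
  have carrier_S: "carrier ?S = N \<times> K" by (simp add: semidirect_def)
  show "mult_pair \<in> hom ?S G"
  proof (rule homI)
    fix s t assume "s \<in> carrier ?S" "t \<in> carrier ?S"
    then obtain a x b y where "s = (a, x)" "t = (b, y)" "a \<in> N" "x \<in> K" "b \<in> N" "y \<in> K"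
      by (auto simp: carrier_S)
    then show "mult_pair (s \<otimes>\<^bsub>?S\<^esub> t) = mult_pair s \<otimes> mult_pair t"
      by (simp add: semidirect_def conjg_def m_assoc)
  next
    fix s assume "s \<in> carrier ?S"
    then show "mult_pair s \<in> carrier G" by (auto simp: carrier_S)
  qed
  have "inj_on mult_pair (N \<times> K)"
  proof (rule inj_onI)
    fix s t assume "s \<in> N \<times> K" "t \<in> N \<times> K" "mult_pair s = mult_pair t"
    then show "s = t"
      using decomposition_unique[of "fst s" "fst t" "snd s" "snd t"]
      by (simp add: prod_eq_iff mem_Times_iff)
  qed
  moreover have "mult_pair ` (N \<times> K) = carrier G"
  proof
    show "carrier G \<subseteq> mult_pair ` (N \<times> K)"
    proof
      fix g assume "g \<in> carrier G"
      then obtain a k where "a \<in> N" "k \<in> K" "g = a \<otimes> k" by (rule decompositionE)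
      then show "g \<in> mult_pair ` (N \<times> K)" by (intro image_eqI[of _ _ "(a, k)"]) auto
    qed
  qed auto
  ultimately show "bij_betw mult_pair (carrier ?S) (carrier G)"
    by (simp add: bij_betw_def carrier_S)
qed

lemma mult_pair_inv_into:
  assumes "a \<in> N" "k \<in> K"
  shows "inv_into (carrier (semidirect (G\<lparr>carrier := N\<rparr>) (G\<lparr>carrier := K\<rparr>) (conjg G))) mult_pair
    (a \<otimes> k) = (a, k)"
  using mult_pair_iso assms
  by (intro inv_into_f_eq) (auto simp: iso_def bij_betw_def semidirect_def)

end

locale complement_fixing_aut = internal_semidirect +
  fixes F
  assumes hom_F: "F \<in> hom G G"
    and F_fixes_K: "k \<in> K \<Longrightarrow> F k = k"
    and F_mult_self: "a \<in> N \<Longrightarrow> F a \<otimes> a \<in> K"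
begin

sublocale F: group_hom G G F
  by (simp add: group_hom_def group_hom_axioms_def hom_F is_group)

text \<open>Write \<open>F a = t \<otimes> inv a\<close> with \<open>t \<in> K\<close>. Applying the hypothesis to \<open>a \<otimes> a\<close> shows
  \<open>inv a \<otimes> t \<otimes> a \<in> K\<close>, so the commutator of \<open>inv a\<close> and \<open>t\<close> lies in \<open>N \<inter> K\<close>;
  hence \<open>t\<close> commutes with \<open>a\<close> and \<open>F (F a) = t \<otimes> a \<otimes> inv t = a\<close>.\<close>
lemma F_F_mem_N:
  assumes a: "a \<in> N"
  shows "F (F a) = a"
proof -
  define t where "t = F a \<otimes> a"
  have t: "t \<in> K" using F_mult_self a by (simp add: t_def)
  have Fa: "F a = t \<otimes> inv a" using a by (simp add: t_def m_assoc)
  have "F (a \<otimes> a) \<otimes> (a \<otimes> a) = t \<otimes> (inv a \<otimes> t \<otimes> a)"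
    using a t by (simp add: Fa m_assoc)
  moreover have "F (a \<otimes> a) \<otimes> (a \<otimes> a) \<in> K" using F_mult_self[of "a \<otimes> a"] a by simp
  ultimately have "inv t \<otimes> (t \<otimes> (inv a \<otimes> t \<otimes> a)) \<in> K" using t by simp
  then have "inv a \<otimes> t \<otimes> a \<otimes> inv t \<in> K" using a t by simp
  moreover have "inv a \<otimes> t \<otimes> a \<otimes> inv t \<in> N"
    using a t N.inv_op_closed2[of t a] by (simp add: m_assoc)
  ultimately have "inv a \<otimes> t \<otimes> a \<otimes> inv t = \<one>" using N_inter_K by blast
  then have "inv a \<otimes> (t \<otimes> a) = t"
    using a t inv_solve_right'[of \<one> "inv a \<otimes> t \<otimes> a" t] by (simp add: m_assoc)
  then have commute: "t \<otimes> a = a \<otimes> t"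
    using a t inv_solve_left'[of t a "t \<otimes> a"] by simp
  have "F (F a) = t \<otimes> inv (F a)" using a t by (simp add: Fa F_fixes_K)
  also have "\<dots> = t \<otimes> a \<otimes> inv t" using a t by (simp add: Fa inv_mult_group m_assoc)
  also have "\<dots> = a" using a t by (simp add: commute m_assoc)
  finally show ?thesis .
qed

lemma F_F [simp]:
  assumes "g \<in> carrier G"
  shows "F (F g) = g"
proof -
  obtain a k where "a \<in> N" "k \<in> K" "g = a \<otimes> k" using assms by (rule decompositionE)
  then show ?thesis by (simp add: F_fixes_K F_F_mem_N)
qed

lemma iso_F: "F \<in> iso G G"
  by (rule isoI[OF hom_F], rule bij_betwI[where g = F]) auto

lemma inv_into_F: "g \<in> carrier G \<Longrightarrow> inv_into (carrier G) F g = F g"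
  by (metis F_F F.hom_closed iso_F iso_iff inv_into_f_eq)

lemma normal_image_F: "F ` N \<lhd> G"
proof (rule normal_invI)
  show "subgroup (F ` N) G"
    by (rule F.subgroup_img_is_subgroup[OF N.subgroup_axioms])
  show "x \<otimes> h \<otimes> inv x \<in> F ` N" if x: "x \<in> carrier G" and h: "h \<in> F ` N" for x h
  proof -
    obtain a where a: "a \<in> N" "h = F a" using h by blast
    have "x \<otimes> h \<otimes> inv x = F (F x \<otimes> a \<otimes> inv (F x))" using a x by simp
    moreover have "F x \<otimes> a \<otimes> inv (F x) \<in> N" using a x by (simp add: N.inv_op_closed2)
    ultimately show ?thesis by auto
  qed
qed

end

section \<open>Semidirect products and 1-cycles\<close>

locale aut_action =
  fixes A :: "('a, 'b) monoid_scheme" and H :: "('h, 'c) monoid_scheme" and \<phi> :: "'h \<Rightarrow> 'a \<Rightarrow> 'a"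
  assumes action_by_aut: "action_by_aut H A \<phi>"
begin

sublocale A: group A using action_by_aut by (simp add: action_by_aut_def)
sublocale H: group H using action_by_aut by (simp add: action_by_aut_def)

lemma group_hom_action: "x \<in> carrier H \<Longrightarrow> group_hom A A (\<phi> x)"
  using action_by_aut
  by (simp add: action_by_aut_def group_hom_def group_hom_axioms_def iso_imp_homomorphism)

lemma action_closed [simp]: "x \<in> carrier H \<Longrightarrow> a \<in> carrier A \<Longrightarrow> \<phi> x a \<in> carrier A"
  by (rule group_hom.hom_closed[OF group_hom_action])

lemma action_mult [simp]:
  "x \<in> carrier H \<Longrightarrow> a \<in> carrier A \<Longrightarrow> b \<in> carrier A \<Longrightarrow>
    \<phi> x (a \<otimes>\<^bsub>A\<^esub> b) = \<phi> x a \<otimes>\<^bsub>A\<^esub> \<phi> x b"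
  by (rule group_hom.hom_mult[OF group_hom_action])

lemma action_one [simp]: "x \<in> carrier H \<Longrightarrow> \<phi> x \<one>\<^bsub>A\<^esub> = \<one>\<^bsub>A\<^esub>"
  by (rule group_hom.hom_one[OF group_hom_action])

lemma action_inv [simp]:
  "x \<in> carrier H \<Longrightarrow> a \<in> carrier A \<Longrightarrow> \<phi> x (inv\<^bsub>A\<^esub> a) = inv\<^bsub>A\<^esub> (\<phi> x a)"
  by (rule group_hom.hom_inv[OF group_hom_action])

lemma action_by_one [simp]: "a \<in> carrier A \<Longrightarrow> \<phi> \<one>\<^bsub>H\<^esub> a = a"
  using action_by_aut by (simp add: action_by_aut_def)

lemma action_compose:
  "x \<in> carrier H \<Longrightarrow> y \<in> carrier H \<Longrightarrow> a \<in> carrier A \<Longrightarrow> \<phi> (x \<otimes>\<^bsub>H\<^esub> y) a = \<phi> x (\<phi> y a)"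
  using action_by_aut by (simp add: action_by_aut_def)

lemma action_cancel:
  "x \<in> carrier H \<Longrightarrow> a \<in> carrier A \<Longrightarrow> \<phi> x (\<phi> (inv\<^bsub>H\<^esub> x) a) = a"
  by (simp flip: action_compose)

abbreviation S where "S \<equiv> semidirect A H \<phi>"

lemma carrier_semidirect: "carrier S = carrier A \<times> carrier H"
  by (simp add: semidirect_def)

lemma mult_semidirect [simp]: "(a, x) \<otimes>\<^bsub>S\<^esub> (b, y) = (a \<otimes>\<^bsub>A\<^esub> \<phi> x b, x \<otimes>\<^bsub>H\<^esub> y)"
  by (simp add: semidirect_def)

lemma one_semidirect: "\<one>\<^bsub>S\<^esub> = (\<one>\<^bsub>A\<^esub>, \<one>\<^bsub>H\<^esub>)"
  by (simp add: semidirect_def)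

lemma mem_carrier_semidirect [simp]: "(a, x) \<in> carrier S \<longleftrightarrow> a \<in> carrier A \<and> x \<in> carrier H"
  by (simp add: semidirect_def)

lemma group_semidirect: "group S"
proof (rule groupI)
  fix p q assume "p \<in> carrier S" "q \<in> carrier S"
  then show "p \<otimes>\<^bsub>S\<^esub> q \<in> carrier S" by (cases p, cases q) auto
next
  show "\<one>\<^bsub>S\<^esub> \<in> carrier S" by (simp add: one_semidirect)
next
  fix p q r assume "p \<in> carrier S" "q \<in> carrier S" "r \<in> carrier S"
  then show "p \<otimes>\<^bsub>S\<^esub> q \<otimes>\<^bsub>S\<^esub> r = p \<otimes>\<^bsub>S\<^esub> (q \<otimes>\<^bsub>S\<^esub> r)"
    by (cases p, cases q, cases r) (simp add: A.m_assoc H.m_assoc action_compose)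
next
  fix p assume "p \<in> carrier S"
  then show "\<one>\<^bsub>S\<^esub> \<otimes>\<^bsub>S\<^esub> p = p" by (cases p) (simp add: one_semidirect)
next
  fix p assume "p \<in> carrier S"
  then obtain a x where p: "p = (a, x)" "a \<in> carrier A" "x \<in> carrier H" by (cases p) auto
  then have "(\<phi> (inv\<^bsub>H\<^esub> x) (inv\<^bsub>A\<^esub> a), inv\<^bsub>H\<^esub> x) \<otimes>\<^bsub>S\<^esub> p = \<one>\<^bsub>S\<^esub>"
    and "(\<phi> (inv\<^bsub>H\<^esub> x) (inv\<^bsub>A\<^esub> a), inv\<^bsub>H\<^esub> x) \<in> carrier S"
    by (simp_all add: one_semidirect flip: action_mult)
  then show "\<exists>q\<in>carrier S. q \<otimes>\<^bsub>S\<^esub> p = \<one>\<^bsub>S\<^esub>" by blast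
qed

sublocale S: group S by (rule group_semidirect)

lemma inv_semidirect:
  "a \<in> carrier A \<Longrightarrow> x \<in> carrier H \<Longrightarrow>
    inv\<^bsub>S\<^esub> (a, x) = (\<phi> (inv\<^bsub>H\<^esub> x) (inv\<^bsub>A\<^esub> a), inv\<^bsub>H\<^esub> x)"
  by (rule S.inv_equality) (simp_all add: one_semidirect flip: action_mult)

lemma conjg_inH_inA:
  "x \<in> carrier H \<Longrightarrow> a \<in> carrier A \<Longrightarrow> conjg S (inH A H x) (inA A H a) = inA A H (\<phi> x a)"
  by (simp add: conjg_def inH_def inA_def inv_semidirect)

lemma mem_inA_image: "s \<in> inA A H ` carrier A \<longleftrightarrow> (\<exists>a\<in>carrier A. s = (a, \<one>\<^bsub>H\<^esub>))"
  by (auto simp: inA_def)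

lemma mem_Gminus_of: "s \<in> Gminus_of A H \<longleftrightarrow> (\<exists>x\<in>carrier H. s = (\<one>\<^bsub>A\<^esub>, x))"
  by (auto simp: Gminus_of_def inH_def)

lemma subgroup_Gminus_of: "subgroup (Gminus_of A H) S"
  by (rule S.subgroupI) (auto simp: Gminus_of_def inH_def inv_semidirect)

lemma normal_inA_image: "inA A H ` carrier A \<lhd> S"
proof (rule S.normal_invI)
  show "subgroup (inA A H ` carrier A) S"
    by (rule S.subgroupI) (auto simp: inA_def inv_semidirect)
  show "s \<otimes>\<^bsub>S\<^esub> t \<otimes>\<^bsub>S\<^esub> inv\<^bsub>S\<^esub> s \<in> inA A H ` carrier A"
    if "s \<in> carrier S" "t \<in> inA A H ` carrier A" for s t
    using that by (auto simp: mem_inA_image carrier_semidirect inv_semidirect)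
qed

lemma internal_semidirect_semidirect:
  "internal_semidirect S (inA A H ` carrier A) (Gminus_of A H)"
proof (intro internal_semidirect.intro internal_semidirect_axioms.intro)
  show "inA A H ` carrier A \<inter> Gminus_of A H \<subseteq> {\<one>\<^bsub>S\<^esub>}"
    by (auto simp: inA_def Gminus_of_def inH_def one_semidirect)
  show "carrier S \<subseteq> inA A H ` carrier A <#>\<^bsub>S\<^esub> Gminus_of A H"
  proof
    fix s assume "s \<in> carrier S"
    then obtain a x where "s = (a, x)" "a \<in> carrier A" "x \<in> carrier H"
      by (auto simp: carrier_semidirect)
    then have "s = (a, \<one>\<^bsub>H\<^esub>) \<otimes>\<^bsub>S\<^esub> (\<one>\<^bsub>A\<^esub>, x)" "(a, \<one>\<^bsub>H\<^esub>) \<in> inA A H ` carrier A"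
      "(\<one>\<^bsub>A\<^esub>, x) \<in> Gminus_of A H"
      by (auto simp: mem_inA_image mem_Gminus_of)
    then show "s \<in> inA A H ` carrier A <#>\<^bsub>S\<^esub> Gminus_of A H"
      unfolding set_mult_def by blast
  qed
qed (rule group_semidirect normal_inA_image subgroup_Gminus_of)+

end

locale cocycle_action = aut_action +
  fixes \<zeta>
  assumes one_cycle: "one_cycle A H \<phi> \<zeta>"
begin

lemma cocycle_closed [simp]: "a \<in> carrier A \<Longrightarrow> \<zeta> a \<in> carrier H"
  using one_cycle by (auto simp: one_cycle_def)

lemma cocycle_mult:
  "a \<in> carrier A \<Longrightarrow> b \<in> carrier A \<Longrightarrow> \<zeta> a \<otimes>\<^bsub>H\<^esub> \<zeta> b = \<zeta> (a \<otimes>\<^bsub>A\<^esub> \<phi> (\<zeta> a) b)"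
  using one_cycle by (simp add: one_cycle_def)

lemma cocycle_one [simp]: "\<zeta> \<one>\<^bsub>A\<^esub> = \<one>\<^bsub>H\<^esub>"
  using cocycle_mult[of "\<one>\<^bsub>A\<^esub>" "\<one>\<^bsub>A\<^esub>"] by simp

lemma cocycle_inv:
  assumes a: "a \<in> carrier A"
  shows "\<zeta> (inv\<^bsub>A\<^esub> (\<phi> (inv\<^bsub>H\<^esub> \<zeta> a) a)) = inv\<^bsub>H\<^esub> \<zeta> a"
proof -
  let ?b = "inv\<^bsub>A\<^esub> (\<phi> (inv\<^bsub>H\<^esub> \<zeta> a) a)"
  have "\<zeta> a \<otimes>\<^bsub>H\<^esub> \<zeta> ?b = \<one>\<^bsub>H\<^esub>"
    using cocycle_mult[of a ?b] a by (simp flip: action_compose)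
  then have "\<zeta> ?b \<otimes>\<^bsub>H\<^esub> \<zeta> a = \<one>\<^bsub>H\<^esub>" by (rule H.inv_comm) (use a in simp_all)
  then show ?thesis by (rule H.inv_equality[symmetric]) (use a in simp_all)
qed

lemma Gplus_of_eq: "Gplus_of A H \<phi> \<zeta> = (\<lambda>a. (a, \<zeta> a)) ` carrier A"
  unfolding Gplus_of_def Setcompr_eq_image by (rule image_cong) (simp_all add: inA_def inH_def)

lemma mem_Gplus_of: "s \<in> Gplus_of A H \<phi> \<zeta> \<longleftrightarrow> (\<exists>a. s = (a, \<zeta> a) \<and> a \<in> carrier A)"
  unfolding Gplus_of_eq by auto

lemma subgroup_Gplus_of: "subgroup (Gplus_of A H \<phi> \<zeta>) S"
proof (rule S.subgroupI)
  show "Gplus_of A H \<phi> \<zeta> \<subseteq> carrier S" by (auto simp: mem_Gplus_of)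
  have "(\<one>\<^bsub>A\<^esub>, \<zeta> \<one>\<^bsub>A\<^esub>) \<in> Gplus_of A H \<phi> \<zeta>" by (simp add: mem_Gplus_of)
  then show "Gplus_of A H \<phi> \<zeta> \<noteq> {}" by auto
  show "inv\<^bsub>S\<^esub> s \<in> Gplus_of A H \<phi> \<zeta>" if s: "s \<in> Gplus_of A H \<phi> \<zeta>" for s
  proof -
    obtain a where "s = (a, \<zeta> a)" "a \<in> carrier A" using s by (auto simp: mem_Gplus_of)
    then show ?thesis by (simp add: inv_semidirect mem_Gplus_of cocycle_inv)
  qed
  show "s \<otimes>\<^bsub>S\<^esub> t \<in> Gplus_of A H \<phi> \<zeta>"
    if st: "s \<in> Gplus_of A H \<phi> \<zeta>" "t \<in> Gplus_of A H \<phi> \<zeta>" for s t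
  proof -
    obtain a b where "s = (a, \<zeta> a)" "a \<in> carrier A" "t = (b, \<zeta> b)" "b \<in> carrier A"
      using st by (auto simp: mem_Gplus_of)
    then show ?thesis by (simp add: mem_Gplus_of cocycle_mult)
  qed
qed

lemma unique_factorization_Gplus_of:
  "unique_factorization S (Gplus_of A H \<phi> \<zeta>) (Gminus_of A H)"
proof -
  have "\<exists>!p. p \<in> Gplus_of A H \<phi> \<zeta> \<times> Gminus_of A H \<and> s = fst p \<otimes>\<^bsub>S\<^esub> snd p"
    if "s \<in> carrier S" for s
  proof -
    obtain a x where s: "s = (a, x)" "a \<in> carrier A" "x \<in> carrier H"
      using \<open>s \<in> carrier S\<close> by (auto simp: carrier_semidirect)
    let ?p = "((a, \<zeta> a), (\<one>\<^bsub>A\<^esub>, inv\<^bsub>H\<^esub> \<zeta> a \<otimes>\<^bsub>H\<^esub> x))"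
    show ?thesis
    proof (rule ex1I[of _ ?p])
      show "?p \<in> Gplus_of A H \<phi> \<zeta> \<times> Gminus_of A H \<and> s = fst ?p \<otimes>\<^bsub>S\<^esub> snd ?p"
        using s by (auto simp: mem_Gplus_of mem_Gminus_of)
      fix p assume p: "p \<in> Gplus_of A H \<phi> \<zeta> \<times> Gminus_of A H \<and> s = fst p \<otimes>\<^bsub>S\<^esub> snd p"
      then obtain b y where b: "p = ((b, \<zeta> b), (\<one>\<^bsub>A\<^esub>, y))" "b \<in> carrier A" "y \<in> carrier H"
        by (auto simp: mem_Gplus_of mem_Gminus_of)
      then have "a = b" "x = \<zeta> b \<otimes>\<^bsub>H\<^esub> y" using p s by simp_all
      then show "p = ?p" using b s by (simp add: H.inv_solve_left)
    qed
  qed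
  then show ?thesis
    using subgroup_Gplus_of subgroup_Gminus_of by (simp add: unique_factorization_def)
qed

end

section \<open>From a 1-cycle to a unique factorization\<close>

locale cycle_datum =
  fixes A :: "('a, 'b) monoid_scheme" and H :: "('h, 'c) monoid_scheme" and \<phi> :: "'h \<Rightarrow> 'a \<Rightarrow> 'a"
    and \<zeta> :: "'a \<Rightarrow> 'h" and F :: "'a \<times> 'h \<Rightarrow> 'a \<times> 'h"
  assumes cycle_triple: "cycle_triple A H \<phi> \<zeta> F"
begin

sublocale cocycle_action A H \<phi> \<zeta>
  using cycle_triple
  by (simp add: cycle_triple_def cocycle_action_def cocycle_action_axioms_def aut_action_def)

lemma iso_F_semidirect: "F \<in> iso S S"
  using cycle_triple by (simp only: cycle_triple_def)

lemma F_inH [simp]: "x \<in> carrier H \<Longrightarrow> F (\<one>\<^bsub>A\<^esub>, x) = (\<one>\<^bsub>A\<^esub>, x)"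
  using cycle_triple by (simp only: cycle_triple_def inH_def)

lemma F_inA_mult_inA:
  "a \<in> carrier A \<Longrightarrow> F (inA A H a) \<otimes>\<^bsub>S\<^esub> inA A H a \<in> Gminus_of A H"
  using cycle_triple by (simp only: cycle_triple_def Gminus_of_def)

sublocale aut: complement_fixing_aut S "inA A H ` carrier A" "Gminus_of A H" F
proof (intro complement_fixing_aut.intro complement_fixing_aut_axioms.intro)
  show "internal_semidirect S (inA A H ` carrier A) (Gminus_of A H)"
    by (rule internal_semidirect_semidirect)
  show "F \<in> hom S S" by (rule iso_imp_homomorphism[OF iso_F_semidirect])
  show "F k = k" if "k \<in> Gminus_of A H" for k using that by (auto simp: mem_Gminus_of)
  show "F a \<otimes>\<^bsub>S\<^esub> a \<in> Gminus_of A H" if "a \<in> inA A H ` carrier A" for a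
    using that F_inA_mult_inA by blast
qed

lemma F_inA:
  assumes a: "a \<in> carrier A"
  obtains \<theta> where "\<theta> \<in> carrier H" "F (a, \<one>\<^bsub>H\<^esub>) = (\<phi> \<theta> (inv\<^bsub>A\<^esub> a), \<theta>)"
proof -
  obtain c \<theta> where c: "F (a, \<one>\<^bsub>H\<^esub>) = (c, \<theta>)" "c \<in> carrier A" "\<theta> \<in> carrier H"
    using aut.F.hom_closed[of "(a, \<one>\<^bsub>H\<^esub>)"] a by (cases "F (a, \<one>\<^bsub>H\<^esub>)") auto
  have "(c, \<theta>) \<otimes>\<^bsub>S\<^esub> (a, \<one>\<^bsub>H\<^esub>) \<in> Gminus_of A H"
    using aut.F_mult_self[of "(a, \<one>\<^bsub>H\<^esub>)"] a c by (simp add: inA_def)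
  then have "c \<otimes>\<^bsub>A\<^esub> \<phi> \<theta> a = \<one>\<^bsub>A\<^esub>" using a c by (auto simp: mem_Gminus_of)
  then have "c = \<phi> \<theta> (inv\<^bsub>A\<^esub> a)" using a c by (simp add: A.inv_equality[symmetric])
  with c that show ?thesis by blast
qed

lemma P_of_hom: "P_of A H \<in> hom S (S\<lparr>carrier := Gminus_of A H\<rparr>)"
  by (rule homI) (auto simp: carrier_semidirect P_of_def inH_def Gminus_of_def)

lemma eta_of_eq: "s \<in> carrier S \<Longrightarrow> eta_of A H \<phi> F s = P_of A H (F s)"
  by (simp add: eta_of_def aut.inv_into_F)

lemma xi_of_hom:
  "xi_of A H \<in> hom (S\<lparr>carrier := Gplus_of A H \<phi> \<zeta>\<rparr>) (S\<lparr>carrier := Gminus_of A H\<rparr>)"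
  unfolding xi_of_def by (rule hom_restrict_carrier[OF P_of_hom subgroup.subset[OF subgroup_Gplus_of]])

lemma eta_of_hom:
  "eta_of A H \<phi> F \<in> hom (S\<lparr>carrier := Gplus_of A H \<phi> \<zeta>\<rparr>) (S\<lparr>carrier := Gminus_of A H\<rparr>)"
proof -
  have "P_of A H \<circ> F \<in> hom S (S\<lparr>carrier := Gminus_of A H\<rparr>)"
    by (rule hom_compose[OF aut.hom_F P_of_hom])
  then have "eta_of A H \<phi> F \<in> hom S (S\<lparr>carrier := Gminus_of A H\<rparr>)"
    by (rule S.hom_eq) (simp add: eta_of_eq)
  then show ?thesis by (rule hom_restrict_carrier[OF _ subgroup.subset[OF subgroup_Gplus_of]])
qed

lemma xi_of_graph:
  "a \<in> carrier A \<Longrightarrow> (a, \<zeta> a) \<otimes>\<^bsub>S\<^esub> xi_of A H (inv\<^bsub>S\<^esub> (a, \<zeta> a)) = (a, \<one>\<^bsub>H\<^esub>)"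
  by (simp add: xi_of_def P_of_def inH_def inv_semidirect)

lemma eta_of_graph:
  assumes a: "a \<in> carrier A"
  shows "eta_of A H \<phi> F (a, \<zeta> a) \<otimes>\<^bsub>S\<^esub> inv\<^bsub>S\<^esub> (a, \<zeta> a) = F (a, \<one>\<^bsub>H\<^esub>)"
proof -
  obtain \<theta> where \<theta>: "\<theta> \<in> carrier H" "F (a, \<one>\<^bsub>H\<^esub>) = (\<phi> \<theta> (inv\<^bsub>A\<^esub> a), \<theta>)"
    using F_inA[OF a] by blast
  have "F (a, \<zeta> a) = F ((a, \<one>\<^bsub>H\<^esub>) \<otimes>\<^bsub>S\<^esub> (\<one>\<^bsub>A\<^esub>, \<zeta> a))" using a by simp
  also have "\<dots> = F (a, \<one>\<^bsub>H\<^esub>) \<otimes>\<^bsub>S\<^esub> F (\<one>\<^bsub>A\<^esub>, \<zeta> a)"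
    by (rule aut.F.hom_mult) (use a in simp_all)
  also have "\<dots> = F (a, \<one>\<^bsub>H\<^esub>) \<otimes>\<^bsub>S\<^esub> (\<one>\<^bsub>A\<^esub>, \<zeta> a)" using a by simp
  finally have "eta_of A H \<phi> F (a, \<zeta> a) = (\<one>\<^bsub>A\<^esub>, \<theta> \<otimes>\<^bsub>H\<^esub> \<zeta> a)"
    using a \<theta> by (simp add: eta_of_eq P_of_def inH_def)
  then have "eta_of A H \<phi> F (a, \<zeta> a) \<otimes>\<^bsub>S\<^esub> inv\<^bsub>S\<^esub> (a, \<zeta> a) =
      (\<phi> (\<theta> \<otimes>\<^bsub>H\<^esub> \<zeta> a) (\<phi> (inv\<^bsub>H\<^esub> \<zeta> a) (inv\<^bsub>A\<^esub> a)),
       \<theta> \<otimes>\<^bsub>H\<^esub> \<zeta> a \<otimes>\<^bsub>H\<^esub> inv\<^bsub>H\<^esub> \<zeta> a)"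
    using a \<theta> by (simp add: inv_semidirect del: action_inv)
  also have "\<dots> = (\<phi> \<theta> (inv\<^bsub>A\<^esub> a), \<theta>)"
    using a \<theta> by (simp add: action_compose action_cancel H.m_assoc del: action_inv)
  finally show ?thesis using \<theta> by simp
qed

lemma plus1_Gplus_of: "plus1 S (Gplus_of A H \<phi> \<zeta>) (xi_of A H) = inA A H ` carrier A"
proof -
  have "plus1 S (Gplus_of A H \<phi> \<zeta>) (xi_of A H) =
      (\<lambda>a. (a, \<zeta> a) \<otimes>\<^bsub>S\<^esub> xi_of A H (inv\<^bsub>S\<^esub> (a, \<zeta> a))) ` carrier A"
    unfolding plus1_def Setcompr_eq_image Gplus_of_eq image_image ..
  also have "\<dots> = inA A H ` carrier A"
    unfolding inA_def by (rule image_cong) (simp_all add: xi_of_graph)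
  finally show ?thesis .
qed

lemma plus2_Gplus_of: "plus2 S (Gplus_of A H \<phi> \<zeta>) (eta_of A H \<phi> F) = F ` inA A H ` carrier A"
proof -
  interpret Gp: subgroup "Gplus_of A H \<phi> \<zeta>" S by (rule subgroup_Gplus_of)
  have "plus2 S (Gplus_of A H \<phi> \<zeta>) (eta_of A H \<phi> F) =
      (\<lambda>u. eta_of A H \<phi> F (inv\<^bsub>S\<^esub> u) \<otimes>\<^bsub>S\<^esub> u) ` Gplus_of A H \<phi> \<zeta>"
    unfolding plus2_def Setcompr_eq_image ..
  also have "\<dots> = (\<lambda>u. eta_of A H \<phi> F u \<otimes>\<^bsub>S\<^esub> inv\<^bsub>S\<^esub> u) ` Gplus_of A H \<phi> \<zeta>"
    unfolding set_eq_iff image_iff by (metis Gp.m_inv_closed Gp.mem_carrier S.inv_inv)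
  also have "\<dots> = (\<lambda>a. F (a, \<one>\<^bsub>H\<^esub>)) ` carrier A"
    unfolding Gplus_of_eq image_image by (rule image_cong) (simp_all add: eta_of_graph)
  also have "\<dots> = F ` inA A H ` carrier A"
    by (simp add: image_image inA_def)
  finally show ?thesis .
qed

theorem factorization_triple_semidirect:
  "factorization_triple S (Gplus_of A H \<phi> \<zeta>) (Gminus_of A H) (xi_of A H) (eta_of A H \<phi> F)"
  unfolding factorization_triple_def
proof (intro conjI exI)
  show "finite (carrier S)" using cycle_triple unfolding cycle_triple_def by blast
  show "F \<in> iso (S\<lparr>carrier := plus1 S (Gplus_of A H \<phi> \<zeta>) (xi_of A H)\<rparr>)
      (S\<lparr>carrier := plus2 S (Gplus_of A H \<phi> \<zeta>) (eta_of A H \<phi> F)\<rparr>)"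
  proof -
    have "restrict F (inA A H ` carrier A) \<in>
        iso (S\<lparr>carrier := inA A H ` carrier A\<rparr>) (S\<lparr>carrier := F ` inA A H ` carrier A\<rparr>)"
      by (rule iso_restrict[OF aut.iso_F S.is_group S.is_group aut.N.subgroup_axioms])
    then show ?thesis
      unfolding plus1_Gplus_of plus2_Gplus_of
      by (rule group.iso_eq[OF aut.N.subgroup_is_group[OF S.is_group]]) simp
  qed
  show "\<forall>u\<in>Gplus_of A H \<phi> \<zeta>.
      F (u \<otimes>\<^bsub>S\<^esub> xi_of A H (inv\<^bsub>S\<^esub> u)) = eta_of A H \<phi> F u \<otimes>\<^bsub>S\<^esub> inv\<^bsub>S\<^esub> u"
    by (auto simp: Gplus_of_eq xi_of_graph eta_of_graph)
qed (simp_all add: S.is_group subgroup_Gminus_of unique_factorization_Gplus_of xi_of_hom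
    eta_of_hom plus1_Gplus_of plus2_Gplus_of aut.normal_N aut.normal_image_F)

lemma zeta_eq_semidirect:
  assumes \<zeta>': "zeta_eq S (Gplus_of A H \<phi> \<zeta>) (xi_of A H) \<zeta>'" and a: "a \<in> carrier A"
  shows "\<zeta>' (inA A H a) = inH A H (\<zeta> a)"
proof -
  have "(a, \<zeta> a) \<in> Gplus_of A H \<phi> \<zeta>" using a by (auto simp: mem_Gplus_of)
  then have "\<zeta>' ((a, \<zeta> a) \<otimes>\<^bsub>S\<^esub> xi_of A H (inv\<^bsub>S\<^esub> (a, \<zeta> a))) = xi_of A H (a, \<zeta> a)"
    using \<zeta>' unfolding zeta_eq_def by blast
  then have "\<zeta>' (a, \<one>\<^bsub>H\<^esub>) = xi_of A H (a, \<zeta> a)" by (simp only: xi_of_graph[OF a])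
  then show ?thesis by (simp add: xi_of_def P_of_def inA_def inH_def)
qed

lemma F_eq_semidirect:
  assumes F': "F_eq S (Gplus_of A H \<phi> \<zeta>) (Gminus_of A H) (xi_of A H) (eta_of A H \<phi> F) F'"
    and s: "s \<in> carrier S"
  shows "F' s = F s"
proof -
  obtain a y where a: "s = (a, y)" "a \<in> carrier A" "y \<in> carrier H"
    using s by (cases s) (auto simp: carrier_semidirect)
  have "(a, \<zeta> a) \<in> Gplus_of A H \<phi> \<zeta>" using a by (auto simp: mem_Gplus_of)
  moreover have "(\<one>\<^bsub>A\<^esub>, y) \<in> Gminus_of A H" using a by (auto simp: mem_Gminus_of)
  ultimately have "F' ((a, \<zeta> a) \<otimes>\<^bsub>S\<^esub> xi_of A H (inv\<^bsub>S\<^esub> (a, \<zeta> a)) \<otimes>\<^bsub>S\<^esub> (\<one>\<^bsub>A\<^esub>, y)) =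
      eta_of A H \<phi> F (a, \<zeta> a) \<otimes>\<^bsub>S\<^esub> inv\<^bsub>S\<^esub> (a, \<zeta> a) \<otimes>\<^bsub>S\<^esub> (\<one>\<^bsub>A\<^esub>, y)"
    using F' unfolding F_eq_def by blast
  then have "F' (a, y) = F (a, \<one>\<^bsub>H\<^esub>) \<otimes>\<^bsub>S\<^esub> (\<one>\<^bsub>A\<^esub>, y)"
    using a by (simp add: xi_of_graph eta_of_graph)
  also have "\<dots> = F (a, \<one>\<^bsub>H\<^esub>) \<otimes>\<^bsub>S\<^esub> F (\<one>\<^bsub>A\<^esub>, y)" using a by simp
  also have "\<dots> = F ((a, \<one>\<^bsub>H\<^esub>) \<otimes>\<^bsub>S\<^esub> (\<one>\<^bsub>A\<^esub>, y))"
    by (rule aut.F.hom_mult[symmetric]) (use a in simp_all)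
  also have "\<dots> = F (a, y)" using a by simp
  finally show ?thesis using a by simp
qed

end

section \<open>From a unique factorization to a 1-cycle\<close>

locale factorization_datum =
  fixes G :: "('g, 'm) monoid_scheme" (structure) and Gp Gm \<xi> \<eta>
  assumes factorization_triple: "factorization_triple G Gp Gm \<xi> \<eta>"
begin

sublocale group G
  using factorization_triple by (simp add: factorization_triple_def)

sublocale Gp: subgroup Gp G
  using factorization_triple by (simp add: factorization_triple_def unique_factorization_def)

sublocale Gm: subgroup Gm G
  using factorization_triple by (simp add: factorization_triple_def)

abbreviation Gp' where "Gp' \<equiv> plus1 G Gp \<xi>"
abbreviation Gp'' where "Gp'' \<equiv> plus2 G Gp \<eta>"

lemma hom_xi: "\<xi> \<in> hom (G\<lparr>carrier := Gp\<rparr>) (G\<lparr>carrier := Gm\<rparr>)"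
  and hom_eta: "\<eta> \<in> hom (G\<lparr>carrier := Gp\<rparr>) (G\<lparr>carrier := Gm\<rparr>)"
  using factorization_triple by (simp_all add: factorization_triple_def)

lemmas xi_closed [simp] = subgroup_homD(1)[OF Gp.subgroup_axioms Gm.subgroup_axioms hom_xi]
  and xi_mult = subgroup_homD(2)[OF Gp.subgroup_axioms Gm.subgroup_axioms hom_xi]
  and xi_inv [simp] = subgroup_homD(3)[OF Gp.subgroup_axioms Gm.subgroup_axioms hom_xi]
  and xi_one [simp] = subgroup_homD(4)[OF Gp.subgroup_axioms Gm.subgroup_axioms hom_xi]
  and eta_closed [simp] = subgroup_homD(1)[OF Gp.subgroup_axioms Gm.subgroup_axioms hom_eta]
  and eta_inv [simp] = subgroup_homD(3)[OF Gp.subgroup_axioms Gm.subgroup_axioms hom_eta]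
  and eta_one [simp] = subgroup_homD(4)[OF Gp.subgroup_axioms Gm.subgroup_axioms hom_eta]

lemma normal_plus1: "Gp' \<lhd> G"
  and normal_plus2: "Gp'' \<lhd> G"
  using factorization_triple by (simp_all add: factorization_triple_def)

lemma mem_plus1: "a \<in> Gp' \<longleftrightarrow> (\<exists>u\<in>Gp. a = u \<otimes> inv (\<xi> u))"
proof
  assume "a \<in> Gp'"
  then obtain u where "u \<in> Gp" "a = u \<otimes> \<xi> (inv u)" by (auto simp: plus1_def)
  then show "\<exists>u\<in>Gp. a = u \<otimes> inv (\<xi> u)" by auto
next
  assume "\<exists>u\<in>Gp. a = u \<otimes> inv (\<xi> u)"
  then obtain u where "u \<in> Gp" "a = u \<otimes> inv (\<xi> u)" by blast
  then show "a \<in> Gp'" unfolding plus1_def by (intro CollectI exI[of _ u]) simp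
qed

lemma mem_plus2: "c \<in> Gp'' \<longleftrightarrow> (\<exists>u\<in>Gp. c = \<eta> u \<otimes> inv u)"
proof
  assume "c \<in> Gp''"
  then obtain u where "u \<in> Gp" "c = \<eta> (inv u) \<otimes> u" by (auto simp: plus2_def)
  then show "\<exists>u\<in>Gp. c = \<eta> u \<otimes> inv u" by (intro bexI[of _ "inv u"]) simp_all
next
  assume "\<exists>u\<in>Gp. c = \<eta> u \<otimes> inv u"
  then obtain u where "u \<in> Gp" "c = \<eta> u \<otimes> inv u" by blast
  then show "c \<in> Gp''" unfolding plus2_def by (intro CollectI exI[of _ "inv u"]) simp
qed

lemma factorization_ex1: "g \<in> carrier G \<Longrightarrow> \<exists>!p. p \<in> Gp \<times> Gm \<and> g = fst p \<otimes> snd p"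
  using factorization_triple by (simp add: factorization_triple_def unique_factorization_def)

lemma factorizationE:
  assumes "g \<in> carrier G"
  obtains u x where "u \<in> Gp" "x \<in> Gm" "g = u \<otimes> x"
  using ex1_implies_ex[OF factorization_ex1[OF assms]] by auto

definition plus_part :: "'g \<Rightarrow> 'g" where
  "plus_part g = fst (THE p. p \<in> Gp \<times> Gm \<and> g = fst p \<otimes> snd p)"

lemma plus_part_mult:
  assumes "u \<in> Gp" "x \<in> Gm"
  shows "plus_part (u \<otimes> x) = u"
proof -
  have "(THE p. p \<in> Gp \<times> Gm \<and> u \<otimes> x = fst p \<otimes> snd p) = (u, x)"
    by (rule the1_equality[OF factorization_ex1]) (use assms in simp_all)
  then show ?thesis by (simp add: plus_part_def)
qed

lemma factorization_unique:
  assumes "u \<in> Gp" "v \<in> Gp" "x \<in> Gm" "y \<in> Gm" and eq: "u \<otimes> x = v \<otimes> y"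
  shows "u = v" and "x = y"
proof -
  show "u = v" using plus_part_mult[of u x] plus_part_mult[of v y] assms by simp
  then show "x = y" using assms by simp
qed

lemma factorization_unique_rev:
  assumes "x \<in> Gm" "y \<in> Gm" "u \<in> Gp" "v \<in> Gp" and eq: "x \<otimes> u = y \<otimes> v"
  shows "x = y" and "u = v"
proof -
  have inv_eq: "inv u \<otimes> inv x = inv v \<otimes> inv y"
    using assms by (simp flip: inv_mult_group)
  have "inv u = inv v" by (rule factorization_unique(1)[OF _ _ _ _ inv_eq]) (use assms in simp_all)
  then have "inv (inv u) = inv (inv v)" by simp
  then show "u = v" using assms by simp
  have "inv x = inv y" by (rule factorization_unique(2)[OF _ _ _ _ inv_eq]) (use assms in simp_all)
  then have "inv (inv x) = inv (inv y)" by simp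
  then show "x = y" using assms by simp
qed

lemma plus1_factor:
  assumes "u \<in> Gp" "y \<in> Gm" "u \<otimes> y \<in> Gp'"
  shows "y = inv (\<xi> u)"
proof -
  obtain w where w: "w \<in> Gp" and eq: "u \<otimes> y = w \<otimes> inv (\<xi> w)"
    using assms(3) by (auto simp: mem_plus1)
  have "u = w" by (rule factorization_unique(1)[OF _ _ _ _ eq]) (use assms w in simp_all)
  moreover have "y = inv (\<xi> w)"
    by (rule factorization_unique(2)[OF _ _ _ _ eq]) (use assms w in simp_all)
  ultimately show ?thesis by simp
qed

lemma plus2_factor:
  assumes "y \<in> Gm" "u \<in> Gp" "y \<otimes> u \<in> Gp''"
  shows "y = inv (\<eta> u)"
proof -
  obtain w where w: "w \<in> Gp" and eq: "y \<otimes> u = \<eta> w \<otimes> inv w"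
    using assms(3) by (auto simp: mem_plus2)
  have "y = \<eta> w" by (rule factorization_unique_rev(1)[OF _ _ _ _ eq]) (use assms w in simp_all)
  moreover have "u = inv w"
    by (rule factorization_unique_rev(2)[OF _ _ _ _ eq]) (use assms w in simp_all)
  ultimately show ?thesis using w by simp
qed

lemma plus1_inter_Gm: "Gp' \<inter> Gm \<subseteq> {\<one>}"
proof
  fix a assume "a \<in> Gp' \<inter> Gm"
  then show "a \<in> {\<one>}" using plus1_factor[of \<one> a] by simp
qed

sublocale plus1: internal_semidirect G Gp' Gm
proof (intro internal_semidirect.intro internal_semidirect_axioms.intro)
  show "carrier G \<subseteq> Gp' <#> Gm"
  proof
    fix g assume "g \<in> carrier G"
    then obtain u x where ux: "u \<in> Gp" "x \<in> Gm" "g = u \<otimes> x" by (rule factorizationE)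
    then have "g = (u \<otimes> inv (\<xi> u)) \<otimes> (\<xi> u \<otimes> x)" by (simp add: m_assoc)
    moreover have "u \<otimes> inv (\<xi> u) \<in> Gp'" using ux by (auto simp: mem_plus1)
    moreover have "\<xi> u \<otimes> x \<in> Gm" using ux by simp
    ultimately show "g \<in> Gp' <#> Gm" unfolding set_mult_def by blast
  qed
qed (rule is_group normal_plus1 Gm.subgroup_axioms plus1_inter_Gm)+

lemma zeta_eq_plus_part: "zeta_eq G Gp \<xi> (\<lambda>a. \<xi> (plus_part a))"
  unfolding zeta_eq_def by (simp add: plus_part_mult)

lemma zeta_plus1: "zeta_eq G Gp \<xi> \<zeta> \<Longrightarrow> u \<in> Gp \<Longrightarrow> \<zeta> (u \<otimes> inv (\<xi> u)) = \<xi> u"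
  by (simp add: zeta_eq_def)

lemma one_cycle_zeta:
  assumes \<zeta>: "zeta_eq G Gp \<xi> \<zeta>"
  shows "one_cycle (G\<lparr>carrier := Gp'\<rparr>) (G\<lparr>carrier := Gm\<rparr>) (conjg G) \<zeta>"
  unfolding one_cycle_def
proof (intro conjI ballI)
  show "\<zeta> \<in> carrier (G\<lparr>carrier := Gp'\<rparr>) \<rightarrow> carrier (G\<lparr>carrier := Gm\<rparr>)"
    using zeta_plus1[OF \<zeta>] by (auto simp: mem_plus1)
  fix a b assume "a \<in> carrier (G\<lparr>carrier := Gp'\<rparr>)" "b \<in> carrier (G\<lparr>carrier := Gp'\<rparr>)"
  then obtain u v where u: "u \<in> Gp" "a = u \<otimes> inv (\<xi> u)" and v: "v \<in> Gp" "b = v \<otimes> inv (\<xi> v)"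
    by (auto simp: mem_plus1)
  have "a \<otimes> conjg G (\<zeta> a) b = a \<otimes> (\<xi> u \<otimes> b \<otimes> inv (\<xi> u))"
    using zeta_plus1[OF \<zeta> u(1)] u by (simp add: conjg_def)
  also have "\<dots> = (u \<otimes> v) \<otimes> inv (\<xi> (u \<otimes> v))"
    using u v by (simp add: xi_mult m_assoc inv_mult_group)
  finally show "\<zeta> a \<otimes>\<^bsub>G\<lparr>carrier := Gm\<rparr>\<^esub> \<zeta> b = \<zeta> (a \<otimes>\<^bsub>G\<lparr>carrier := Gp'\<rparr>\<^esub> conjg G (\<zeta> a) b)"
    using zeta_plus1[OF \<zeta> u(1)] zeta_plus1[OF \<zeta> v(1)] zeta_plus1[OF \<zeta>, of "u \<otimes> v"] u v
    by (simp add: xi_mult)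
qed

lemma F_eq_plus_part:
  "F_eq G Gp Gm \<xi> \<eta>
     (\<lambda>g. \<eta> (plus_part g) \<otimes> inv (plus_part g) \<otimes> \<xi> (plus_part g) \<otimes> inv (plus_part g) \<otimes> g)"
  unfolding F_eq_def
proof (intro ballI)
  fix u x assume ux: "u \<in> Gp" "x \<in> Gm"
  then have "plus_part (u \<otimes> \<xi> (inv u) \<otimes> x) = u"
    using plus_part_mult[of u "inv (\<xi> u) \<otimes> x"] by (simp add: m_assoc)
  with ux show "\<eta> (plus_part (u \<otimes> \<xi> (inv u) \<otimes> x)) \<otimes> inv (plus_part (u \<otimes> \<xi> (inv u) \<otimes> x)) \<otimes>
      \<xi> (plus_part (u \<otimes> \<xi> (inv u) \<otimes> x)) \<otimes> inv (plus_part (u \<otimes> \<xi> (inv u) \<otimes> x)) \<otimes>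
      (u \<otimes> \<xi> (inv u) \<otimes> x) = \<eta> u \<otimes> inv u \<otimes> x"
    by (simp add: m_assoc)
qed

lemma plus_iso_ex:
  "\<exists>f. f \<in> iso (G\<lparr>carrier := Gp'\<rparr>) (G\<lparr>carrier := Gp''\<rparr>) \<and>
     (\<forall>u\<in>Gp. f (u \<otimes> inv (\<xi> u)) = \<eta> u \<otimes> inv u)"
  using factorization_triple by (simp add: factorization_triple_def)

end

locale factorization_aut = factorization_datum +
  fixes F
  assumes F_eq: "F_eq G Gp Gm \<xi> \<eta> F"
begin

lemma F_factor: "u \<in> Gp \<Longrightarrow> x \<in> Gm \<Longrightarrow> F (u \<otimes> inv (\<xi> u) \<otimes> x) = \<eta> u \<otimes> inv u \<otimes> x"
  using F_eq by (simp add: F_eq_def)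

lemma F_plus1: "u \<in> Gp \<Longrightarrow> F (u \<otimes> inv (\<xi> u)) = \<eta> u \<otimes> inv u"
  using F_factor[of u \<one>] by simp

lemma F_Gm [simp]: "x \<in> Gm \<Longrightarrow> F x = x"
  using F_factor[of \<one> x] by simp

lemma F_plus1_mult_Gm:
  assumes "a \<in> Gp'" "x \<in> Gm"
  shows "F (a \<otimes> x) = F a \<otimes> x"
proof -
  obtain u where "u \<in> Gp" "a = u \<otimes> inv (\<xi> u)" using assms(1) by (auto simp: mem_plus1)
  then show ?thesis using F_factor[of u x] F_plus1[of u] assms(2) by simp
qed

lemma F_plus1_mem: "a \<in> Gp' \<Longrightarrow> F a \<in> Gp''"
  by (auto simp: mem_plus1 mem_plus2 F_plus1)

lemma F_mult_self: "a \<in> Gp' \<Longrightarrow> F a \<otimes> a \<in> Gm"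
  by (auto simp: mem_plus1 F_plus1 m_assoc)

lemma F_plus1_mult:
  assumes a: "a \<in> Gp'" and b: "b \<in> Gp'"
  shows "F (a \<otimes> b) = F a \<otimes> F b"
proof -
  obtain f where f: "f \<in> iso (G\<lparr>carrier := Gp'\<rparr>) (G\<lparr>carrier := Gp''\<rparr>)"
    and f_plus1: "\<forall>u\<in>Gp. f (u \<otimes> inv (\<xi> u)) = \<eta> u \<otimes> inv u"
    using plus_iso_ex by blast
  have f_eq_F: "f c = F c" if "c \<in> Gp'" for c
    using that f_plus1 by (auto simp: mem_plus1 F_plus1)
  have "f (a \<otimes> b) = f a \<otimes> f b"
    using hom_mult[OF iso_imp_homomorphism[OF f], of a b] a b by simp
  then show ?thesis using a b f_eq_F by simp
qed

text \<open>Factor \<open>x \<otimes> v = w \<otimes> y\<close> with \<open>w \<in> Gp\<close>, \<open>y \<in> Gm\<close>, where \<open>a = v \<otimes> inv (\<xi> v)\<close>. Both sides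
  equal \<open>\<eta> w \<otimes> inv w\<close>: compare \<open>Gp\<close>-components of \<open>x \<otimes> a \<otimes> inv x \<in> Gp'\<close> in \<open>G = Gp Gm\<close>,
  and of \<open>x \<otimes> F a \<otimes> inv x \<in> Gp''\<close> in \<open>G = Gm Gp\<close>.\<close>
lemma F_conj:
  assumes x: "x \<in> Gm" and a: "a \<in> Gp'"
  shows "F (x \<otimes> a \<otimes> inv x) = x \<otimes> F a \<otimes> inv x"
proof -
  obtain v where v: "v \<in> Gp" "a = v \<otimes> inv (\<xi> v)" using a by (auto simp: mem_plus1)
  obtain w y where wy: "w \<in> Gp" "y \<in> Gm" "x \<otimes> v = w \<otimes> y"
    using factorizationE[of "x \<otimes> v"] x v by auto
  have "x \<otimes> a \<otimes> inv x = (x \<otimes> v) \<otimes> (inv (\<xi> v) \<otimes> inv x)" using x v by (simp add: m_assoc)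
  also have "\<dots> = w \<otimes> (y \<otimes> inv (\<xi> v) \<otimes> inv x)" using x v wy by (simp add: m_assoc)
  finally have conj_a: "x \<otimes> a \<otimes> inv x = w \<otimes> (y \<otimes> inv (\<xi> v) \<otimes> inv x)" .
  moreover have "x \<otimes> a \<otimes> inv x \<in> Gp'" using x a by (simp add: plus1.N.inv_op_closed2)
  ultimately have "y \<otimes> inv (\<xi> v) \<otimes> inv x = inv (\<xi> w)"
    using plus1_factor[of w "y \<otimes> inv (\<xi> v) \<otimes> inv x"] x v wy by simp
  then have lhs: "F (x \<otimes> a \<otimes> inv x) = \<eta> w \<otimes> inv w" using conj_a F_plus1 wy by simp
  have "inv v \<otimes> inv x = inv y \<otimes> inv w"
    using x v wy by (simp flip: inv_mult_group)
  then have conj_Fa: "x \<otimes> F a \<otimes> inv x = (x \<otimes> \<eta> v \<otimes> inv y) \<otimes> inv w"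
    using x v wy by (simp add: F_plus1 m_assoc)
  moreover have "x \<otimes> F a \<otimes> inv x \<in> Gp''"
    using x a F_plus1_mem normal_invE(2)[OF normal_plus2] by simp
  ultimately have "x \<otimes> \<eta> v \<otimes> inv y = \<eta> w"
    using plus2_factor[of "x \<otimes> \<eta> v \<otimes> inv y" "inv w"] x v wy by simp
  with lhs conj_Fa show ?thesis using wy by simp
qed

lemma F_closed:
  assumes "g \<in> carrier G"
  shows "F g \<in> carrier G"
proof -
  obtain a x where ax: "a \<in> Gp'" "x \<in> Gm" "g = a \<otimes> x" using assms by (rule plus1.decompositionE)
  have "F a \<in> Gp''" using ax(1) by (rule F_plus1_mem)
  then have "F a \<in> carrier G" by (rule subgroup.mem_carrier[OF normal_imp_subgroup[OF normal_plus2]])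
  with ax show ?thesis by (simp add: F_plus1_mult_Gm)
qed

lemma hom_F: "F \<in> hom G G"
proof (rule homI)
  fix g h assume "g \<in> carrier G" "h \<in> carrier G"
  then obtain a x b y where ax: "a \<in> Gp'" "x \<in> Gm" "g = a \<otimes> x"
    and hy: "b \<in> Gp'" "y \<in> Gm" "h = b \<otimes> y"
    by (metis plus1.decompositionE)
  have conj_b: "x \<otimes> b \<otimes> inv x \<in> Gp'" using ax hy by (simp add: plus1.N.inv_op_closed2)
  have "F (g \<otimes> h) = F ((a \<otimes> (x \<otimes> b \<otimes> inv x)) \<otimes> (x \<otimes> y))"
    using ax hy by (simp add: m_assoc)
  also have "\<dots> = F a \<otimes> (x \<otimes> F b \<otimes> inv x) \<otimes> (x \<otimes> y)"
    using ax hy conj_b by (simp add: F_plus1_mult_Gm F_plus1_mult F_conj)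
  also have "\<dots> = (F a \<otimes> x) \<otimes> (F b \<otimes> y)"
    using ax hy F_closed by (simp add: m_assoc)
  also have "\<dots> = F g \<otimes> F h" using ax hy by (simp add: F_plus1_mult_Gm)
  finally show "F (g \<otimes> h) = F g \<otimes> F h" .
qed (rule F_closed)

sublocale aut: complement_fixing_aut G Gp' Gm F
  by unfold_locales (simp_all add: hom_F F_mult_self)

end

context factorization_datum
begin

theorem semidirect_of_factorization:
  shows "action_by_aut (G\<lparr>carrier := Gm\<rparr>) (G\<lparr>carrier := Gp'\<rparr>) (conjg G)"
    and "(\<lambda>s. fst s \<otimes> snd s) \<in> iso (semidirect (G\<lparr>carrier := Gp'\<rparr>) (G\<lparr>carrier := Gm\<rparr>) (conjg G)) G"
    and "\<exists>\<zeta>. zeta_eq G Gp \<xi> \<zeta> \<and> one_cycle (G\<lparr>carrier := Gp'\<rparr>) (G\<lparr>carrier := Gm\<rparr>) (conjg G) \<zeta>"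
    and "\<exists>F. F_eq G Gp Gm \<xi> \<eta> F \<and> F \<in> iso G G \<and> (\<forall>x\<in>Gm. F x = x) \<and> (\<forall>a\<in>Gp'. F a \<otimes> a \<in> Gm)"
proof -
  show "action_by_aut (G\<lparr>carrier := Gm\<rparr>) (G\<lparr>carrier := Gp'\<rparr>) (conjg G)"
    by (rule action_by_aut_conjg[OF normal_plus1 Gm.subgroup_axioms])
  show "(\<lambda>s. fst s \<otimes> snd s) \<in> iso (semidirect (G\<lparr>carrier := Gp'\<rparr>) (G\<lparr>carrier := Gm\<rparr>) (conjg G)) G"
    by (rule plus1.mult_pair_iso)
  show "\<exists>\<zeta>. zeta_eq G Gp \<xi> \<zeta> \<and> one_cycle (G\<lparr>carrier := Gp'\<rparr>) (G\<lparr>carrier := Gm\<rparr>) (conjg G) \<zeta>"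
    using zeta_eq_plus_part one_cycle_zeta by blast
  obtain F where F: "F_eq G Gp Gm \<xi> \<eta> F" using F_eq_plus_part by blast
  then interpret factorization_aut G Gp Gm \<xi> \<eta> F by unfold_locales
  show "\<exists>F. F_eq G Gp Gm \<xi> \<eta> F \<and> F \<in> iso G G \<and> (\<forall>x\<in>Gm. F x = x) \<and> (\<forall>a\<in>Gp'. F a \<otimes> a \<in> Gm)"
    using F aut.iso_F F_mult_self by auto
qed

end

section \<open>The two constructions are mutually inverse\<close>

locale factorization_cycle = factorization_aut +
  fixes \<zeta>
  assumes zeta_eq: "zeta_eq G Gp \<xi> \<zeta>"
begin

abbreviation SG where "SG \<equiv> semidirect (G\<lparr>carrier := Gp'\<rparr>) (G\<lparr>carrier := Gm\<rparr>) (conjg G)"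
abbreviation \<iota> where "\<iota> \<equiv> \<lambda>s. fst s \<otimes> snd s"
abbreviation FS where "FS \<equiv> \<lambda>s. inv_into (carrier SG) \<iota> (F (\<iota> s))"

sublocale conj: aut_action "G\<lparr>carrier := Gp'\<rparr>" "G\<lparr>carrier := Gm\<rparr>" "conjg G"
  by unfold_locales (rule action_by_aut_conjg[OF normal_plus1 Gm.subgroup_axioms])

lemma carrier_SG: "carrier SG = Gp' \<times> Gm"
  by (simp add: semidirect_def)

sublocale iota: group_hom SG G \<iota>
  using plus1.mult_pair_iso
  by (simp add: group_hom_def group_hom_axioms_def conj.group_semidirect is_group iso_imp_homomorphism)

lemma iso_inv_iota: "inv_into (carrier SG) \<iota> \<in> iso G SG"
  by (rule conj.S.iso_set_sym[OF plus1.mult_pair_iso])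

lemma iota_FS: "s \<in> carrier SG \<Longrightarrow> \<iota> (FS s) = F (\<iota> s)"
  using plus1.mult_pair_iso aut.F.hom_closed[of "\<iota> s"]
  by (auto simp: iso_def bij_betw_def intro!: f_inv_into_f)

lemma iso_FS: "FS \<in> iso SG SG"
proof -
  have "inv_into (carrier SG) \<iota> \<circ> (F \<circ> \<iota>) \<in> iso SG SG"
    by (rule iso_set_trans[OF iso_set_trans[OF plus1.mult_pair_iso aut.iso_F] iso_inv_iota])
  then show ?thesis by (simp add: comp_def)
qed

lemma inv_iota_Gm: "x \<in> Gm \<Longrightarrow> inv_into (carrier SG) \<iota> x = (\<one>, x)"
  using plus1.mult_pair_inv_into[of \<one> x] by simp

lemma inv_iota_plus1: "a \<in> Gp' \<Longrightarrow> inv_into (carrier SG) \<iota> a = (a, \<one>)"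
  using plus1.mult_pair_inv_into[of a \<one>] by simp

lemma inv_iota_F_mult:
  assumes a: "a \<in> Gp'"
  shows "inv_into (carrier SG) \<iota> (F a) \<otimes>\<^bsub>SG\<^esub> (a, \<one>) = (\<one>, F a \<otimes> a)"
proof -
  have "inv_into (carrier SG) \<iota> (F a) \<otimes>\<^bsub>SG\<^esub> (a, \<one>) =
      inv_into (carrier SG) \<iota> (F a) \<otimes>\<^bsub>SG\<^esub> inv_into (carrier SG) \<iota> a"
    using a by (simp add: inv_iota_plus1)
  also have "\<dots> = inv_into (carrier SG) \<iota> (F a \<otimes> a)"
    using a aut.F.hom_closed[of a] by (simp add: hom_mult[OF iso_imp_homomorphism[OF iso_inv_iota]])
  also have "\<dots> = (\<one>, F a \<otimes> a)"
    using F_mult_self[OF a] by (simp add: inv_iota_Gm)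
  finally show ?thesis .
qed

theorem cycle_triple_transport: "cycle_triple (G\<lparr>carrier := Gp'\<rparr>) (G\<lparr>carrier := Gm\<rparr>) (conjg G) \<zeta> FS"
  unfolding cycle_triple_def
proof (intro conjI ballI)
  have "finite (carrier G)" using factorization_triple by (simp add: factorization_triple_def)
  then have "finite Gp'" "finite Gm"
    using finite_subset[OF plus1.N.subset] finite_subset[OF Gm.subset] by auto
  then show "finite (carrier SG)" by (simp add: carrier_SG)
  show "FS (inH (G\<lparr>carrier := Gp'\<rparr>) (G\<lparr>carrier := Gm\<rparr>) x) = inH (G\<lparr>carrier := Gp'\<rparr>) (G\<lparr>carrier := Gm\<rparr>) x"
    if "x \<in> carrier (G\<lparr>carrier := Gm\<rparr>)" for x
    using that by (simp add: inH_def inv_iota_Gm)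
  show "FS (inA (G\<lparr>carrier := Gp'\<rparr>) (G\<lparr>carrier := Gm\<rparr>) a) \<otimes>\<^bsub>SG\<^esub> inA (G\<lparr>carrier := Gp'\<rparr>) (G\<lparr>carrier := Gm\<rparr>) a
      \<in> inH (G\<lparr>carrier := Gp'\<rparr>) (G\<lparr>carrier := Gm\<rparr>) ` carrier (G\<lparr>carrier := Gm\<rparr>)"
    if "a \<in> carrier (G\<lparr>carrier := Gp'\<rparr>)" for a
  proof -
    have "a \<in> Gp'" using that by simp
    then have "FS (a, \<one>) \<otimes>\<^bsub>SG\<^esub> (a, \<one>) = inH (G\<lparr>carrier := Gp'\<rparr>) (G\<lparr>carrier := Gm\<rparr>) (F a \<otimes> a)"
      by (simp add: inH_def inv_iota_F_mult)
    then show ?thesis using F_mult_self[OF \<open>a \<in> Gp'\<close>] by (simp add: inA_def)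
  qed
qed (simp_all add: conj.action_by_aut one_cycle_zeta[OF zeta_eq] iso_FS)

sublocale transport: cycle_datum "G\<lparr>carrier := Gp'\<rparr>" "G\<lparr>carrier := Gm\<rparr>" "conjg G" \<zeta> FS
  by unfold_locales (rule cycle_triple_transport)

lemma mem_Gplus_of_transport:
  assumes "g \<in> Gplus_of (G\<lparr>carrier := Gp'\<rparr>) (G\<lparr>carrier := Gm\<rparr>) (conjg G) \<zeta>"
  obtains u where "u \<in> Gp" "g = (u \<otimes> inv (\<xi> u), \<xi> u)"
proof -
  obtain a where "g = (a, \<zeta> a)" "a \<in> Gp'" using assms by (auto simp: transport.mem_Gplus_of)
  with that show ?thesis using zeta_plus1[OF zeta_eq] by (auto simp: mem_plus1)
qed

lemma iota_Gplus_of: "\<iota> ` Gplus_of (G\<lparr>carrier := Gp'\<rparr>) (G\<lparr>carrier := Gm\<rparr>) (conjg G) \<zeta> = Gp"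
proof -
  have plus1_eq: "Gp' = (\<lambda>u. u \<otimes> inv (\<xi> u)) ` Gp"
    unfolding set_eq_iff mem_plus1 image_iff by blast
  have "\<iota> ` Gplus_of (G\<lparr>carrier := Gp'\<rparr>) (G\<lparr>carrier := Gm\<rparr>) (conjg G) \<zeta> =
      (\<lambda>a. a \<otimes> \<zeta> a) ` Gp'"
    by (simp add: transport.Gplus_of_eq image_image)
  also have "\<dots> = (\<lambda>u. u \<otimes> inv (\<xi> u) \<otimes> \<zeta> (u \<otimes> inv (\<xi> u))) ` Gp"
    unfolding plus1_eq image_image ..
  also have "\<dots> = (\<lambda>u. u) ` Gp"
    by (rule image_cong) (simp_all add: zeta_plus1[OF zeta_eq] m_assoc)
  finally show ?thesis by simp
qed

lemma xi_of_transport: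
  assumes "g \<in> Gplus_of (G\<lparr>carrier := Gp'\<rparr>) (G\<lparr>carrier := Gm\<rparr>) (conjg G) \<zeta>"
  shows "\<iota> (xi_of (G\<lparr>carrier := Gp'\<rparr>) (G\<lparr>carrier := Gm\<rparr>) g) = \<xi> (\<iota> g)"
proof -
  obtain u where "u \<in> Gp" "g = (u \<otimes> inv (\<xi> u), \<xi> u)" using assms by (rule mem_Gplus_of_transport)
  then show ?thesis by (simp add: xi_of_def P_of_def inH_def m_assoc)
qed

lemma eta_of_transport:
  assumes g: "g \<in> Gplus_of (G\<lparr>carrier := Gp'\<rparr>) (G\<lparr>carrier := Gm\<rparr>) (conjg G) \<zeta>"
  shows "\<iota> (eta_of (G\<lparr>carrier := Gp'\<rparr>) (G\<lparr>carrier := Gm\<rparr>) (conjg G) FS g) = \<eta> (\<iota> g)"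
proof -
  let ?e = "eta_of (G\<lparr>carrier := Gp'\<rparr>) (G\<lparr>carrier := Gm\<rparr>) (conjg G) FS g"
  obtain u where u: "u \<in> Gp" and g_eq: "g = (u \<otimes> inv (\<xi> u), \<xi> u)"
    using g by (rule mem_Gplus_of_transport)
  let ?a = "u \<otimes> inv (\<xi> u)"
  have a: "?a \<in> Gp'" using u by (auto simp: mem_plus1)
  have g_graph: "g = (?a, \<zeta> ?a)" using g_eq zeta_plus1[OF zeta_eq u] by simp
  have g_carrier: "g \<in> carrier SG" by (rule subgroup.mem_carrier[OF transport.subgroup_Gplus_of g])
  have e_carrier: "?e \<in> carrier SG"
    using hom_in_carrier[OF transport.eta_of_hom] g by (auto simp: conj.mem_Gminus_of)
  have "\<iota> ?e \<otimes> inv u = \<iota> (?e \<otimes>\<^bsub>SG\<^esub> inv\<^bsub>SG\<^esub> g)"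
    using g_carrier e_carrier g_eq u by (simp add: m_assoc)
  also have "\<dots> = \<iota> (FS (?a, \<one>))"
    using transport.eta_of_graph[of ?a] a g_graph by simp
  also have "\<dots> = F ?a"
    using a iota_FS[of "(?a, \<one>)"] by (simp add: carrier_SG del: aut.F.hom_mult)
  also have "\<dots> = \<eta> u \<otimes> inv u" using u by (rule F_plus1)
  finally have "\<iota> ?e \<otimes> inv u = \<eta> u \<otimes> inv u" .
  then have "\<iota> ?e = \<eta> u"
    by (rule right_cancel[THEN iffD1, rotated 3]) (use u iota.hom_closed[OF e_carrier] in simp_all)
  then show ?thesis using u g_eq by (simp add: m_assoc)
qed

end

theorem theorem2:
  shows
  "(\<forall>(G::('g, 'm) monoid_scheme) Gp Gm \<xi> \<eta>.
      factorization_triple G Gp Gm \<xi> \<eta> \<longrightarrow>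
      (let A = plus1 G Gp \<xi>; AG = G\<lparr>carrier := A\<rparr>; HG = G\<lparr>carrier := Gm\<rparr> in
        action_by_aut HG AG (conjg G) \<and>
        (\<lambda>s. fst s \<otimes>\<^bsub>G\<^esub> snd s) \<in> iso (semidirect AG HG (conjg G)) G \<and>
        (\<exists>\<zeta>. zeta_eq G Gp \<xi> \<zeta> \<and> one_cycle AG HG (conjg G) \<zeta>) \<and>
        (\<exists>F. F_eq G Gp Gm \<xi> \<eta> F \<and> F \<in> iso G G \<and>
             (\<forall>x\<in>Gm. F x = x) \<and> (\<forall>a\<in>A. F a \<otimes>\<^bsub>G\<^esub> a \<in> Gm))))
   \<and>
   (\<forall>(A::('a, 'b) monoid_scheme) (H::('h, 'c) monoid_scheme) \<phi> \<zeta> F.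
      cycle_triple A H \<phi> \<zeta> F \<longrightarrow>
      factorization_triple (semidirect A H \<phi>) (Gplus_of A H \<phi> \<zeta>) (Gminus_of A H)
        (xi_of A H) (eta_of A H \<phi> F))
   \<and>
   (\<forall>(G::('g, 'm) monoid_scheme) Gp Gm \<xi> \<eta> \<zeta> F.
      factorization_triple G Gp Gm \<xi> \<eta> \<and> zeta_eq G Gp \<xi> \<zeta> \<and> F_eq G Gp Gm \<xi> \<eta> F \<longrightarrow>
      (let A = plus1 G Gp \<xi>; AG = G\<lparr>carrier := A\<rparr>; HG = G\<lparr>carrier := Gm\<rparr>;
           S = semidirect AG HG (conjg G);
           \<iota> = (\<lambda>s. fst s \<otimes>\<^bsub>G\<^esub> snd s);
           FS = (\<lambda>s. inv_into (carrier S) \<iota> (F (\<iota> s))) in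
        cycle_triple AG HG (conjg G) \<zeta> FS \<and>
        \<iota> ` Gplus_of AG HG (conjg G) \<zeta> = Gp \<and>
        (\<forall>g\<in>Gplus_of AG HG (conjg G) \<zeta>.
           \<iota> (xi_of AG HG g) = \<xi> (\<iota> g) \<and> \<iota> (eta_of AG HG (conjg G) FS g) = \<eta> (\<iota> g))))
   \<and>
   (\<forall>(A::('a, 'b) monoid_scheme) (H::('h, 'c) monoid_scheme) \<phi> \<zeta> F.
      cycle_triple A H \<phi> \<zeta> F \<longrightarrow>
      (let S = semidirect A H \<phi>; Gp = Gplus_of A H \<phi> \<zeta>; Gm = Gminus_of A H;
           \<xi> = xi_of A H; \<eta> = eta_of A H \<phi> F in
        plus1 S Gp \<xi> = inA A H ` carrier A \<and>
        (\<forall>x\<in>carrier H. \<forall>a\<in>carrier A. conjg S (inH A H x) (inA A H a) = inA A H (\<phi> x a)) \<and>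
        (\<forall>\<zeta>'. zeta_eq S Gp \<xi> \<zeta>' \<longrightarrow> (\<forall>a\<in>carrier A. \<zeta>' (inA A H a) = inH A H (\<zeta> a))) \<and>
        (\<forall>F'. F_eq S Gp Gm \<xi> \<eta> F' \<longrightarrow> (\<forall>s\<in>carrier S. F' s = F s))))"
  apply (intro conjI allI impI; (unfold Let_def)?; (elim conjE)?)
  subgoal premises triple for G Gp Gm \<xi> \<eta>
  proof -
    interpret factorization_datum G Gp Gm \<xi> \<eta> by (rule factorization_datum.intro[OF triple])
    show ?thesis using semidirect_of_factorization by simp
  qed
  subgoal premises triple for A H \<phi> \<zeta> F
    by (rule cycle_datum.factorization_triple_semidirect[OF cycle_datum.intro[OF triple]])
  subgoal premises prems for G Gp Gm \<xi> \<eta> \<zeta> F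
  proof -
    interpret factorization_cycle G Gp Gm \<xi> \<eta> F \<zeta> by unfold_locales (rule prems)+
    show ?thesis using cycle_triple_transport iota_Gplus_of xi_of_transport eta_of_transport by simp
  qed
  subgoal premises triple for A H \<phi> \<zeta> F
  proof -
    interpret cycle_datum A H \<phi> \<zeta> F by (rule cycle_datum.intro[OF triple])
    show ?thesis
      using plus1_Gplus_of conjg_inH_inA zeta_eq_semidirect F_eq_semidirect by (simp add: inA_def)
  qed
  done

end
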